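(* Let $s\ge 2$ and $r',s'\in\mathbb N$ with $1\le r'\le s'$, and let $F:U\subseteq\mathcal G(1,s)=\mathbb P^{1,s}\to\mathcal G(r',s')$ be a local orthogonal map. If $\dim V_{F(H\cap U)}=\dim V_{F(U)}$ for every general hyperplane $H$ in $\mathbb P^{1,s}$, then $F$ is null, i.e. $F(U)$ consists of null points of $\mathcal G(r',s')$.
   Context: For $r\le s$, $\mathbb C^{r,s}$ denotes $\mathbb C^{r+s}$ with the indefinite Hermitian form $\langle z,w\rangle_{r,s}=\sum_{i=1}^r z_i\bar w_i-\sum_{i=r+1}^{r+s}z_i\bar w_i$, and $\mathbb P^{r,s}$ its projectivization. $\mathcal G(r,s)$ denotes the Grassmannian $G(r,r+s)$; for $p\in\mathcal G(r,s)$, $V_p\subseteq\mathbb C^{r+s}$ is the corresponding $r$-dimensional subspace, and $p\perp q$ means $V_p\perp V_q$ with respect to $\langle\cdot,\cdot\rangle_{r,s}$; $p$ is null if $V_p\perp V_p$. For a set $K\subseteq\mathcal G(r,s)$, $V_K$ denotes the linear span of $\bigcup_{p\in K}V_p$. A holomorphic map $F:U\to\mathcal G(r',s')$, with $U\subseteq\mathcal G(r,s)$ a connected open set containing a null point, is a local orthogonal map if $F(p)\perp F(q)$ for all $p,q\in U$ with $p\perp q$; it is null if $F(U)$ consists of null points. "General hyperplane" means a hyperplane in a nonempty Zariski-open subset of the space of hyperplanes of $\mathbb P^{1,s}$. *)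

theory Defs
  imports "HOL-Analysis.Analysis"
begin

text \<open>Vectors of C^{r+s} are modelled as complex ^ 'n with 'n a finite linearly ordered
index type, CARD('n) = r + s; the first r indices (w.r.t. the order) are the positive ones.\<close>

definition pos_idx :: "nat \<Rightarrow> 'n::{finite,linorder} \<Rightarrow> bool" where
  "pos_idx r i \<longleftrightarrow> card {j. j < i} < r"

definition herm :: "nat \<Rightarrow> (complex ^ 'n::{finite,linorder}) \<Rightarrow> (complex ^ 'n::{finite,linorder}) \<Rightarrow> complex" where
  "herm r z w = (\<Sum>i\<in>UNIV. (if pos_idx r i then 1 else -1) * z $ i * cnj (w $ i))"

definition grass :: "nat \<Rightarrow> (complex ^ 'n::{finite,linorder}) set set" where
  "grass r = {V. vec.subspace V \<and> vec.dim V = r}"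

definition orth :: "nat \<Rightarrow> (complex ^ 'n::{finite,linorder}) set \<Rightarrow> (complex ^ 'n::{finite,linorder}) set \<Rightarrow> bool" where
  "orth r V W \<longleftrightarrow> (\<forall>v\<in>V. \<forall>w\<in>W. herm r v w = 0)"

definition null_pt :: "nat \<Rightarrow> (complex ^ 'n::{finite,linorder}) set \<Rightarrow> bool" where
  "null_pt r V \<longleftrightarrow> orth r V V"

definition VK :: "(complex ^ 'n::{finite,linorder}) set set \<Rightarrow> (complex ^ 'n::{finite,linorder}) set" where
  "VK K = vec.span (\<Union>K)"

definition pcone :: "(complex ^ 'n::{finite,linorder}) set set \<Rightarrow> (complex ^ 'n::{finite,linorder}) set" where
  "pcone U = {z. z \<noteq> 0 \<and> vec.span {z} \<in> U}"

definition cholo_on :: "(complex ^ 'a::finite) set \<Rightarrow> (complex ^ 'a \<Rightarrow> complex ^ 'b::finite) \<Rightarrow> bool" where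
  "cholo_on W f \<longleftrightarrow> open W \<and> (\<forall>z\<in>W. \<exists>L. (f has_derivative L) (at z) \<and> (\<forall>c v. L (c *s v) = c *s L v))"

definition holo_grass_map :: "nat \<Rightarrow> (complex ^ 'a::{finite,linorder}) set set
    \<Rightarrow> ((complex ^ 'a::{finite,linorder}) set \<Rightarrow> (complex ^ 'b::{finite,linorder}) set) \<Rightarrow> bool" where
  "holo_grass_map r' U F \<longleftrightarrow>
     (\<forall>p\<in>U. F p \<in> grass r') \<and>
     (\<forall>z0\<in>pcone U. \<exists>W f. open W \<and> z0 \<in> W \<and> W \<subseteq> pcone U \<and>
        (\<forall>j<r'. cholo_on W (f j)) \<and>
        (\<forall>z\<in>W. F (vec.span {z}) = vec.span {f j z | j. j < r'}))"

text \<open>Local orthogonal map F : U \<subseteq> G(1,s) = P^{1,s} \<rightarrow> G(r',s'). U is open/connected in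
P^{1,s}, i.e. its cone in C^{1+s} \ {0} is open/connected.\<close>
definition loc_orth_map :: "nat \<Rightarrow> (complex ^ 'a::{finite,linorder}) set set
    \<Rightarrow> ((complex ^ 'a::{finite,linorder}) set \<Rightarrow> (complex ^ 'b::{finite,linorder}) set) \<Rightarrow> bool" where
  "loc_orth_map r' U F \<longleftrightarrow>
     U \<subseteq> grass 1 \<and> open (pcone U) \<and> connected (pcone U) \<and> (\<exists>p\<in>U. null_pt 1 p) \<and>
     holo_grass_map r' U F \<and>
     (\<forall>p\<in>U. \<forall>q\<in>U. orth 1 p q \<longrightarrow> orth r' (F p) (F q))"

definition phyp :: "complex ^ 'a::{finite,linorder} \<Rightarrow> (complex ^ 'a::{finite,linorder}) set set" where
  "phyp a = {L \<in> grass 1. \<forall>z\<in>L. (\<Sum>i\<in>UNIV. a $ i * z $ i) = 0}"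

definition hom_poly :: "(complex ^ 'a::finite \<Rightarrow> complex) \<Rightarrow> bool" where
  "hom_poly p \<longleftrightarrow> (\<exists>d E c. finite E \<and> (\<forall>e\<in>E. (\<Sum>i\<in>UNIV. e i) = (d::nat)) \<and>
      p = (\<lambda>z. \<Sum>e\<in>E. c e * (\<Prod>i\<in>UNIV. z $ i ^ e i)))"

text \<open>Nonempty Zariski-open set of hyperplanes (dual projective space), described by the cone of
coefficient vectors: complement of the common zero locus of a set of homogeneous polynomials.\<close>
definition zariski_open_ne :: "(complex ^ 'a::finite) set \<Rightarrow> bool" where
  "zariski_open_ne Hs \<longleftrightarrow> Hs \<noteq> {} \<and>
     (\<exists>P. (\<forall>p\<in>P. hom_poly p) \<and> Hs = {a. a \<noteq> 0 \<and> (\<exists>p\<in>P. p a \<noteq> 0)})"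

end

theory Submission
  imports Defs "HOL-Computational_Algebra.Polynomial"
begin

text \<open>
  Every point \<open>L\<close> of the polar hyperplane \<open>H\<^sub>p = {L. L \<perp> p}\<close> of a point \<open>p \<in> U\<close> is
  orthogonal to \<open>p\<close>, so \<open>F(L) \<perp> F(p)\<close>. If \<open>H\<^sub>p\<close> is general, the hypothesis gives
  \<open>V\<^bsub>F(H\<^sub>p \<inter> U)\<^esub> = V\<^bsub>F(U)\<^esub> \<supseteq> F(p)\<close>, hence \<open>F(p) \<perp> F(p)\<close>.
  The polar hyperplanes that are general form a Zariski-open, hence dense, set, and being
  null is a closed condition on \<open>p\<close> because \<open>F\<close> has continuous local frames; so every
  \<open>F(p)\<close> is null.
\<close>

lemma herm_add_left: "herm r (x + y) w = herm r x w + herm r y w"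
  by (simp add: herm_def algebra_simps sum.distrib)

lemma herm_scale_left: "herm r (c *s x) w = c * herm r x w"
  by (simp add: herm_def sum_distrib_left algebra_simps)

lemma herm_zero_left: "herm r 0 w = 0"
  by (simp add: herm_def)

lemma cnj_herm: "cnj (herm r x y) = herm r y x"
  unfolding herm_def by (auto simp: mult_ac intro!: sum.cong)

lemma herm_eq_0_span_left:
  assumes "\<forall>v\<in>A. herm r v w = 0" and "x \<in> vec.span A"
  shows "herm r x w = 0"
  using assms(2)
proof (induction rule: vec.span_induct_alt)
  case base
  then show ?case by (simp add: herm_zero_left)
next
  case (step c x y)
  then show ?case using assms(1) by (simp add: herm_add_left herm_scale_left)
qed

lemma herm_eq_0_span:
  assumes "\<forall>v\<in>A. \<forall>w\<in>B. herm r v w = 0" and "x \<in> vec.span A" and "y \<in> vec.span B"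
  shows "herm r x y = 0"
proof -
  have "\<forall>w\<in>B. herm r w x = 0"
    using assms(1,2) herm_eq_0_span_left by (metis cnj_herm complex_cnj_zero)
  then have "herm r y x = 0"
    using herm_eq_0_span_left assms(3) by blast
  then show ?thesis by (metis cnj_herm complex_cnj_zero)
qed

lemma null_pt_span_iff: "null_pt r (vec.span A) \<longleftrightarrow> (\<forall>v\<in>A. \<forall>w\<in>A. herm r v w = 0)"
proof
  assume "null_pt r (vec.span A)"
  then show "\<forall>v\<in>A. \<forall>w\<in>A. herm r v w = 0"
    by (simp add: null_pt_def orth_def vec.span_base)
next
  assume "\<forall>v\<in>A. \<forall>w\<in>A. herm r v w = 0"
  then show "null_pt r (vec.span A)"
    unfolding null_pt_def orth_def using herm_eq_0_span by blast
qed

lemma continuous_on_herm: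
  "continuous_on S f \<Longrightarrow> continuous_on S g \<Longrightarrow> continuous_on S (\<lambda>x. herm r (f x) (g x))"
  unfolding herm_def by (intro continuous_intros)

text \<open>The coefficient vector of the polar hyperplane \<open>{x. herm r x z = 0}\<close> of \<open>z\<close>.\<close>
definition polar :: "nat \<Rightarrow> complex ^ 'n::{finite,linorder} \<Rightarrow> complex ^ 'n::{finite,linorder}" where
  "polar r z = (\<chi> i. (if pos_idx r i then 1 else -1) * cnj (z $ i))"

lemma sum_polar_eq_herm: "(\<Sum>i\<in>UNIV. polar r z $ i * x $ i) = herm r x z"
  by (simp add: polar_def herm_def mult_ac)

lemma polar_add_scale: "polar r (x + c *s y) = polar r x + cnj c *s polar r y"
  by (simp add: polar_def vec_eq_iff algebra_simps)

lemma polar_polar [simp]: "polar r (polar r z) = z"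
  by (simp add: polar_def vec_eq_iff)

lemma polar_eq_0_iff [simp]: "polar r z = 0 \<longleftrightarrow> z = 0"
proof -
  have "polar r 0 = 0"
    by (simp add: polar_def vec_eq_iff)
  then show ?thesis by (metis polar_polar)
qed

lemma orth_phyp_polar:
  assumes "L \<in> phyp (polar r z)"
  shows "orth r L (vec.span {z})"
proof -
  have "\<forall>x\<in>L. \<forall>y\<in>{z}. herm r x y = 0"
    using assms by (simp add: phyp_def sum_polar_eq_herm)
  then show ?thesis
    unfolding orth_def using herm_eq_0_span vec.span_superset by blast
qed

lemma VK_eq_if_dim_eq:
  assumes "K \<subseteq> K'" and "vec.dim (VK K) = vec.dim (VK K')"
  shows "VK K = VK K'"
proof -
  have "VK K \<subseteq> VK K'"
    unfolding VK_def using assms(1) by (intro vec.span_mono) blast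
  then show ?thesis
    using vec.subspace_dim_equal assms(2) unfolding VK_def
    by (metis order_refl vec.subspace_span)
qed

lemma null_pt_if_orth_to_VK:
  assumes "P \<subseteq> VK K" and "\<forall>L\<in>K. orth r L P"
  shows "null_pt r P"
  unfolding null_pt_def orth_def
proof (intro ballI)
  fix v w assume "v \<in> P" "w \<in> P"
  moreover have "\<forall>u\<in>\<Union>K. herm r u w = 0"
    using assms(2) \<open>w \<in> P\<close> by (auto simp: orth_def)
  ultimately show "herm r v w = 0"
    using assms(1) herm_eq_0_span_left unfolding VK_def by blast
qed

lemma null_pt_at_general_polar_hyperplane:
  assumes orth_pres: "\<forall>p\<in>U. \<forall>q\<in>U. orth r p q \<longrightarrow> orth r' (F p) (F q)"
    and pU: "vec.span {z} \<in> U"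
    and dim_eq: "vec.dim (VK (F ` (phyp (polar r z) \<inter> U))) = vec.dim (VK (F ` U))"
  shows "null_pt r' (F (vec.span {z}))"
proof (rule null_pt_if_orth_to_VK)
  have "VK (F ` (phyp (polar r z) \<inter> U)) = VK (F ` U)"
    by (rule VK_eq_if_dim_eq[OF image_mono[OF Int_lower2] dim_eq])
  moreover have "F (vec.span {z}) \<subseteq> VK (F ` U)"
    using pU unfolding VK_def by (intro subsetI vec.span_base) blast
  ultimately show "F (vec.span {z}) \<subseteq> VK (F ` (phyp (polar r z) \<inter> U))"
    by simp
  show "\<forall>L'\<in>F ` (phyp (polar r z) \<inter> U). orth r' L' (F (vec.span {z}))"
  proof
    fix L' assume "L' \<in> F ` (phyp (polar r z) \<inter> U)"
    then obtain L where "L \<in> phyp (polar r z)" "L \<in> U" "L' = F L"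
      by blast
    then show "orth r' L' (F (vec.span {z}))"
      using orth_pres pU orth_phyp_polar[OF \<open>L \<in> phyp (polar r z)\<close>] by blast
  qed
qed

lemma hom_poly_on_line:
  assumes "hom_poly q"
  obtains Q where "\<And>t. poly Q t = q (b + t *s d)"
proof -
  obtain E c where q: "q = (\<lambda>z. \<Sum>e\<in>E. c e * (\<Prod>i\<in>UNIV. z $ i ^ e i))"
    using assms unfolding hom_poly_def by blast
  define Q where "Q = (\<Sum>e\<in>E. smult (c e) (\<Prod>i\<in>UNIV. [:b $ i, d $ i:] ^ e i))"
  have "poly Q t = q (b + t *s d)" for t
    by (simp add: Q_def q poly_sum poly_prod mult_ac)
  then show ?thesis using that by blast
qed

lemma eventually_poly_nonzero_at:
  fixes p :: "'a::{idom,t1_space} poly"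
  assumes "p \<noteq> 0"
  shows "\<forall>\<^sub>F t in at x. poly p t \<noteq> 0"
proof -
  have "finite {t. poly p t = 0}"
    using poly_roots_finite[OF assms] .
  then have "\<forall>\<^sub>F t in at x. t \<notin> {t. poly p t = 0}"
    using islimpt_finite islimpt_iff_eventually by blast
  then show ?thesis
    by simp
qed

lemma tendsto_add_scale_vec:
  fixes z w :: "'a::real_normed_field ^ 'n"
  assumes "(f \<longlongrightarrow> 0) F"
  shows "((\<lambda>t. z + f t *s w) \<longlongrightarrow> z) F"
proof -
  have "((\<lambda>t. \<chi> i. z $ i + f t * w $ i) \<longlongrightarrow> (\<chi> i. z $ i + 0 * w $ i)) F"
    by (intro tendsto_intros assms)
  moreover have "(\<lambda>t. \<chi> i. z $ i + f t * w $ i) = (\<lambda>t. z + f t *s w)"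
    by (simp add: vec_eq_iff fun_eq_iff)
  ultimately show ?thesis
    by (simp add: vec_eq_iff)
qed

lemma closure_polar_vimage_zariski_open:
  assumes "zariski_open_ne Hs" and "z0 \<noteq> 0"
  shows "z0 \<in> closure {z. polar r z \<in> Hs}"
proof -
  obtain P where hom: "\<forall>p\<in>P. hom_poly p" and Hs: "Hs = {a. a \<noteq> 0 \<and> (\<exists>p\<in>P. p a \<noteq> 0)}"
    and "Hs \<noteq> {}"
    using assms(1) unfolding zariski_open_ne_def by blast
  then obtain a0 q where "q \<in> P" and "q a0 \<noteq> 0" by blast
  text \<open>The polar of the curve \<open>c\<close> runs along the line from \<open>polar r z0\<close> to \<open>a0\<close>,
    on which \<open>q\<close> is a nonzero polynomial.\<close>
  define d where "d = a0 - polar r z0"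
  define c where "c t = z0 + cnj t *s polar r d" for t
  have polar_c: "polar r (c t) = polar r z0 + t *s d" for t
    by (simp add: c_def polar_add_scale)
  obtain Q where Q: "\<And>t. poly Q t = q (polar r z0 + t *s d)"
    using hom_poly_on_line hom \<open>q \<in> P\<close> by blast
  have "poly Q 1 \<noteq> 0"
    using Q \<open>q a0 \<noteq> 0\<close> by (simp add: d_def)
  then have nonroot: "\<forall>\<^sub>F t in at 0. poly Q t \<noteq> 0"
    by (intro eventually_poly_nonzero_at) auto
  have lim: "(c \<longlongrightarrow> z0) (at 0)"
    unfolding c_def by (intro tendsto_add_scale_vec tendsto_eq_intros) auto
  have "\<forall>\<^sub>F t in at 0. c t \<in> {z. polar r z \<in> Hs}"
    using nonroot tendsto_imp_eventually_ne[OF lim assms(2)]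
  proof eventually_elim
    case (elim t)
    have "polar r (c t) \<noteq> 0"
      using elim(2) by simp
    moreover have "q (polar r (c t)) \<noteq> 0"
      using elim(1) Q polar_c by simp
    ultimately show ?case
      using \<open>q \<in> P\<close> Hs by blast
  qed
  then have "\<forall>\<^sub>F t in at 0. c t \<in> closure {z. polar r z \<in> Hs}"
    by (rule eventually_mono) (rule closure_subset[THEN subsetD])
  then show ?thesis
    by (rule Lim_in_closed_set[OF closed_closure _ at_neq_bot lim])
qed

lemma continuous_on_const_on_dense:
  fixes g :: "'a::topological_space \<Rightarrow> 'b::t1_space"
  assumes "continuous_on W g" and "open W" and "x \<in> W" and "x \<in> closure D"
    and "\<forall>z\<in>W \<inter> D. g z = c"
  shows "g x = c"
proof (rule ccontr)
  assume "g x \<noteq> c"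
  have "open (W \<inter> g -` (- {c}))"
    using continuous_open_preimage[OF assms(1,2) open_Compl[OF closed_singleton]] .
  moreover have "x \<in> W \<inter> g -` (- {c}) \<inter> closure D"
    using assms(3,4) \<open>g x \<noteq> c\<close> by blast
  ultimately have "W \<inter> g -` (- {c}) \<inter> D \<noteq> {}"
    using open_Int_closure_eq_empty[of "W \<inter> g -` (- {c})" D] by blast
  then show False
    using assms(5) by blast
qed

lemma cholo_on_imp_continuous_on: "cholo_on W f \<Longrightarrow> continuous_on W f"
  unfolding cholo_on_def
  by (metis has_derivative_continuous continuous_at_imp_continuous_on)

lemma holo_grass_map_null_pt_closure:
  assumes holo: "holo_grass_map r U F"
    and null: "\<forall>z\<in>pcone U \<inter> D. null_pt r (F (vec.span {z}))"
    and "z0 \<in> pcone U" and "z0 \<in> closure D"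
  shows "null_pt r (F (vec.span {z0}))"
proof -
  obtain W f where "open W" "z0 \<in> W" "W \<subseteq> pcone U"
    and hol: "\<forall>j<r. cholo_on W (f j)"
    and frame: "\<forall>z\<in>W. F (vec.span {z}) = vec.span {f j z | j. j < r}"
    using holo assms(3) unfolding holo_grass_map_def by blast
  have frame_null: "herm r (f j z) (f k z) = 0" if "z \<in> W \<inter> D" "j < r" "k < r" for z j k
  proof -
    have "null_pt r (F (vec.span {z}))"
      using null that(1) \<open>W \<subseteq> pcone U\<close> by blast
    then have "null_pt r (vec.span {f j z | j. j < r})"
      using frame that(1) by simp
    then show ?thesis
      using that(2,3) unfolding null_pt_span_iff by blast
  qed
  have "herm r (f j z0) (f k z0) = 0" if "j < r" "k < r" for j k
  proof (rule continuous_on_const_on_dense[OF _ \<open>open W\<close> \<open>z0 \<in> W\<close> assms(4)])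
    show "continuous_on W (\<lambda>z. herm r (f j z) (f k z))"
      using hol that by (intro continuous_on_herm cholo_on_imp_continuous_on) simp_all
    show "\<forall>z\<in>W \<inter> D. herm r (f j z) (f k z) = 0"
      using frame_null that by blast
  qed
  then show ?thesis
    unfolding frame[rule_format, OF \<open>z0 \<in> W\<close>] null_pt_span_iff by blast
qed

lemma grass_1_eq_span_singleton:
  assumes "p \<in> grass 1"
  obtains z where "z \<noteq> 0" and "p = vec.span {z}"
proof -
  have p: "vec.subspace p" "vec.dim p = 1"
    using assms by (auto simp: grass_def)
  obtain B where B: "B \<subseteq> p" "vec.independent B" "p \<subseteq> vec.span B" "card B = vec.dim p"
    using vec.basis_exists by blast
  from B(4) p(2) have "card B = 1"
    by simp
  then obtain z where z: "B = {z}"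
    by (rule card_1_singletonE)
  have "vec.span B = p"
    by (rule vec.span_subspace[OF B(1,3) p(1)])
  moreover have "z \<noteq> 0"
    using vec.dependent_zero[of B] B(2) z by auto
  ultimately show ?thesis
    using that z by blast
qed

theorem lemma3p2:
  fixes U :: "(complex ^ 'm::{finite,linorder}) set set"
    and F :: "(complex ^ 'm::{finite,linorder}) set \<Rightarrow> (complex ^ 'k::{finite,linorder}) set"
    and s r' s' :: nat
  assumes "CARD('m::{finite,linorder}) = 1 + s" and "s \<ge> 2"
    and "CARD('k::{finite,linorder}) = r' + s'" and "1 \<le> r'" and "r' \<le> s'"
    and "loc_orth_map r' U F"
    and "\<exists>Hs. zariski_open_ne Hs \<and>
           (\<forall>a\<in>Hs. vec.dim (VK (F ` (phyp a \<inter> U))) = vec.dim (VK (F ` U)))"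
  shows "\<forall>p\<in>U. null_pt r' (F p)"
proof
  obtain Hs where Hs: "zariski_open_ne Hs"
    and dim_eq: "\<forall>a\<in>Hs. vec.dim (VK (F ` (phyp a \<inter> U))) = vec.dim (VK (F ` U))"
    using assms(7) by blast
  have "U \<subseteq> grass 1" and holo: "holo_grass_map r' U F"
    and orth_pres: "\<forall>p\<in>U. \<forall>q\<in>U. orth 1 p q \<longrightarrow> orth r' (F p) (F q)"
    using assms(6) by (auto simp: loc_orth_map_def)
  have null_general: "null_pt r' (F (vec.span {z}))" if "z \<in> pcone U \<inter> {z. polar 1 z \<in> Hs}" for z
    using null_pt_at_general_polar_hyperplane[OF orth_pres] that dim_eq
    by (auto simp: pcone_def)
  have null: "null_pt r' (F (vec.span {z}))" if "z \<in> pcone U" for z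
  proof (rule holo_grass_map_null_pt_closure[OF holo _ that])
    show "\<forall>z\<in>pcone U \<inter> {z. polar 1 z \<in> Hs}. null_pt r' (F (vec.span {z}))"
      using null_general by blast
    show "z \<in> closure {z. polar 1 z \<in> Hs}"
      using closure_polar_vimage_zariski_open[OF Hs] that by (simp add: pcone_def)
  qed
  fix p assume "p \<in> U"
  then obtain z where "z \<noteq> 0" and "p = vec.span {z}"
    using \<open>U \<subseteq> grass 1\<close> grass_1_eq_span_singleton by blast
  then show "null_pt r' (F p)"
    using null \<open>p \<in> U\<close> by (simp add: pcone_def)
qed

end
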